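(* Let $R$ be an integer with $1\le R\le\frac{\log n}{24\log\log n}$, $L=6R$, $\eta=n^{1/(2L)}$. Let $\mu_1,\ldots,\mu_n$ be i.i.d. with distribution $\pi$, let $\mu_*=\frac12+\sum_{\ell=1}^L\eta^{-\ell}$, and let $\mathcal{E}_0$ be the event that there is a unique $i^*\in[n]$ with $\mu_{i^*}=\mu_*$. Define $H=\sum_{i\in[n],\,i\neq i^*}(\mu_*-\mu_i)^{-2}$ on $\mathcal{E}_0$. Then $\mathbb{E}[H\mid\mathcal{E}_0]\le\eta^{2+2L}L$.
   Context: $\pi$ is the distribution of the random variable $\mu=\frac12+\sum_{\ell=1}^L X_\ell\eta^{-\ell}$, where $X_1,\ldots,X_L$ are independent Bernoulli random variables each with mean $\eta^{-2}$. *)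

theory Defs
  imports "HOL-Probability.Probability"
begin

definition pi_dist :: "real \<Rightarrow> nat \<Rightarrow> real pmf" where
  "pi_dist \<eta> L = map_pmf (\<lambda>X. 1/2 + (\<Sum>l=1..L. (if X l then 1 else 0) * \<eta> powi (- int l)))
     (Pi_pmf {1..L} False (\<lambda>_. bernoulli_pmf (\<eta> powi (-2))))"

text \<open>Joint law of mu_1,...,mu_n i.i.d. with law pi (indices 0..n-1; value 0 outside).\<close>
definition mus_dist :: "nat \<Rightarrow> real \<Rightarrow> nat \<Rightarrow> (nat \<Rightarrow> real) pmf" where
  "mus_dist n \<eta> L = Pi_pmf {..<n} 0 (\<lambda>_. pi_dist \<eta> L)"

definition mu_star :: "real \<Rightarrow> nat \<Rightarrow> real" where
  "mu_star \<eta> L = 1/2 + (\<Sum>l=1..L. \<eta> powi (- int l))"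

definition E0 :: "nat \<Rightarrow> real \<Rightarrow> nat \<Rightarrow> (nat \<Rightarrow> real) set" where
  "E0 n \<eta> L = {\<mu>. \<exists>!i. i < n \<and> \<mu> i = mu_star \<eta> L}"

text \<open>H = sum over i ~= i* of (mu_* - mu_i)^(-2) (meaningful on E_0).\<close>
definition H :: "nat \<Rightarrow> real \<Rightarrow> nat \<Rightarrow> (nat \<Rightarrow> real) \<Rightarrow> real" where
  "H n \<eta> L \<mu> = (let istar = (THE i. i < n \<and> \<mu> i = mu_star \<eta> L) in
      (\<Sum>i\<in>{..<n} - {istar}. 1 / (mu_star \<eta> L - \<mu> i)^2))"

end

theory Submission
  imports Defs
begin

(* For one sample write Q = P(mu = mu_star) and e = E[(mu_star - mu)^-2; mu ~= mu_star].
   Expanding 1_E0 * H over ordered pairs i ~= j (i the unique hit, j a summand), independence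
   gives E[1_E0 H] = n (n-1) Q (1-Q)^(n-2) e; the same expansion with every summand replaced by 1
   gives (n-1) P(E0), hence E[H | E0] = (n-1) e / (1-Q).
   For pi, mu = mu_star iff all L digits are set, so Q = eta^(-2L) = 1/n and (n-1)/(1-Q) = n.
   If the first unset digit is k, then mu_star - mu >= eta^(-k), while the digits before k are
   all set with probability eta^(-2(k-1)); summing over k gives e <= L eta^2.
   The bound on R is only needed to ensure n >= 2. *)

lemma prod_of_bool:
  assumes "finite A"
  shows "(\<Prod>x\<in>A. of_bool (P x) :: 'b :: comm_semiring_1) = of_bool (\<forall>x\<in>A. P x)"
  using assms by (induction A rule: finite_induct) auto

lemma prod_if_two_points:
  fixes a b c :: "'b :: comm_monoid_mult"
  assumes "finite A" "i \<in> A" "j \<in> A" "i \<noteq> j"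
  shows "(\<Prod>k\<in>A. if k = i then a else if k = j then b else c) = a * b * c ^ (card A - 2)"
proof -
  have "(\<Prod>k\<in>A. if k = i then a else if k = j then b else c) = a * (b * c ^ card (A - {i} - {j}))"
    using assms by (simp add: prod.remove[of A i] prod.remove[of "A - {i}" j])
  moreover have "card (A - {i} - {j}) = card A - 2"
    using assms by (simp add: card_Diff_singleton)
  ultimately show ?thesis by (simp add: mult.assoc)
qed

lemma prod_if_mult_at:
  fixes g h :: "'a \<Rightarrow> 'b :: comm_monoid_mult"
  assumes "finite A" "j \<in> A"
  shows "(\<Prod>k\<in>A. if k = j then g k * h k else g k) = h j * prod g A"
  using assms by (simp add: prod.remove[of A j] mult_ac)

lemma sum_of_bool_unique_mult:
  fixes G :: "'a \<Rightarrow> 'b :: semiring_1"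
  assumes "finite A"
  shows "(\<Sum>i\<in>A. of_bool (\<forall>k\<in>A. P k \<longleftrightarrow> k = i) * G i)
       = (if \<exists>!i. i \<in> A \<and> P i then G (THE i. i \<in> A \<and> P i) else 0)"
proof -
  have sum_eq: "(\<Sum>i\<in>A. of_bool (\<forall>k\<in>A. P k \<longleftrightarrow> k = i) * G i)
      = (\<Sum>i\<in>A \<inter> {i. \<forall>k\<in>A. P k \<longleftrightarrow> k = i}. G i)"
    using assms by (rule sum_of_bool_mult_eq)
  show ?thesis
  proof (cases "\<exists>!i. i \<in> A \<and> P i")
    case True
    then obtain i0 where "i0 \<in> A \<and> P i0" and "\<forall>i. i \<in> A \<and> P i \<longrightarrow> i = i0"
      by blast
    then have "A \<inter> {i. \<forall>k\<in>A. P k \<longleftrightarrow> k = i} = {i0}" and "(THE i. i \<in> A \<and> P i) = i0"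
      by blast+
    then show ?thesis
      using True by (simp add: sum_eq)
  next
    case False
    have "A \<inter> {i. \<forall>k\<in>A. P k \<longleftrightarrow> k = i} = {}"
    proof (intro equalityI subsetI)
      fix i assume "i \<in> A \<inter> {i. \<forall>k\<in>A. P k \<longleftrightarrow> k = i}"
      then have i: "i \<in> A" "\<forall>k\<in>A. P k \<longleftrightarrow> k = i"
        by auto
      have "\<exists>!i. i \<in> A \<and> P i"
        by (rule ex1I[of _ i]) (use i in auto)
      with False show "i \<in> {}" ..
    qed simp
    then show ?thesis
      using False by (simp add: sum_eq)
  qed
qed

lemma expectation_of_bool_eq: "measure_pmf.expectation p (\<lambda>x. of_bool (x = m)) = pmf p m"
proof -
  have "(\<lambda>x. of_bool (x = m)) = (indicator {m} :: _ \<Rightarrow> real)"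
    by (simp add: fun_eq_iff indicator_def)
  then show ?thesis by (simp add: measure_pmf_single)
qed

lemma expectation_of_bool_neq: "measure_pmf.expectation p (\<lambda>x. of_bool (x \<noteq> m)) = 1 - pmf p m"
proof -
  have "(\<lambda>x. of_bool (x \<noteq> m)) = (indicator (UNIV - {m}) :: _ \<Rightarrow> real)"
    by (simp add: fun_eq_iff indicator_def)
  then show ?thesis
    using measure_pmf.prob_compl[of "{m}" p] by (simp add: measure_pmf_single)
qed

lemma expectation_cond_pmf_finite:
  fixes p :: "'a pmf" and f :: "'a \<Rightarrow> real"
  assumes fin: "finite (set_pmf p)" and pos: "measure_pmf.prob p s > 0"
  shows "measure_pmf.expectation (cond_pmf p s) f
         = measure_pmf.expectation p (\<lambda>x. indicator s x * f x) / measure_pmf.prob p s"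
proof -
  have ne: "set_pmf p \<inter> s \<noteq> {}"
  proof
    assume "set_pmf p \<inter> s = {}"
    then have "measure_pmf.prob p s = 0" by (simp only: measure_pmf_zero_iff)
    with pos show False by simp
  qed
  have "measure_pmf.expectation (cond_pmf p s) f = (\<Sum>a\<in>set_pmf p. f a * pmf (cond_pmf p s) a)"
    by (rule integral_measure_pmf_real[OF fin]) (simp add: set_cond_pmf[OF ne])
  also have "\<dots> = (\<Sum>a\<in>set_pmf p. indicator s a * f a * pmf p a / measure_pmf.prob p s)"
    by (intro sum.cong refl) (simp add: pmf_cond[OF ne] indicator_def)
  also have "\<dots> = (\<Sum>a\<in>set_pmf p. indicator s a * f a * pmf p a) / measure_pmf.prob p s"
    by (rule sum_divide_distrib[symmetric])
  also have "(\<Sum>a\<in>set_pmf p. indicator s a * f a * pmf p a) = measure_pmf.expectation p (\<lambda>x. indicator s x * f x)"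
    by (rule integral_measure_pmf_real[OF fin, symmetric]) (simp add: set_pmf_iff)
  finally show ?thesis .
qed

definition unique_hit :: "nat \<Rightarrow> 'a \<Rightarrow> (nat \<Rightarrow> 'a) set" where
  "unique_hit n m = {\<mu>. \<exists>!i. i < n \<and> \<mu> i = m}"

(* Outside unique_hit n m the THE below is unspecified; only the product with the indicator of
   unique_hit n m is ever used. *)
definition sum_off_hit :: "nat \<Rightarrow> 'a \<Rightarrow> ('a \<Rightarrow> real) \<Rightarrow> (nat \<Rightarrow> 'a) \<Rightarrow> real" where
  "sum_off_hit n m f \<mu> = (let i = (THE i. i < n \<and> \<mu> i = m) in \<Sum>j\<in>{..<n} - {i}. f (\<mu> j))"

lemma indicator_unique_hit_mult_sum_off_hit:
  "indicator (unique_hit n m) \<mu> * sum_off_hit n m f \<mu>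
     = (\<Sum>i<n. \<Sum>j\<in>{..<n} - {i}. \<Prod>k<n.
          if k = i then of_bool (\<mu> k = m)
          else if k = j then of_bool (\<mu> k \<noteq> m) * f (\<mu> k) else of_bool (\<mu> k \<noteq> m))"
proof -
  have "(\<Prod>k<n. if k = i then of_bool (\<mu> k = m)
          else if k = j then of_bool (\<mu> k \<noteq> m) * f (\<mu> k) else of_bool (\<mu> k \<noteq> m))
      = of_bool (\<forall>k\<in>{..<n}. \<mu> k = m \<longleftrightarrow> k = i) * f (\<mu> j)"
    if "i < n" "j \<in> {..<n} - {i}" for i j
  proof -
    let ?g = "\<lambda>k. if k = i then of_bool (\<mu> k = m) else of_bool (\<mu> k \<noteq> m) :: real"
    have "(\<Prod>k<n. if k = i then of_bool (\<mu> k = m)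
          else if k = j then of_bool (\<mu> k \<noteq> m) * f (\<mu> k) else of_bool (\<mu> k \<noteq> m))
        = (\<Prod>k<n. if k = j then ?g k * f (\<mu> k) else ?g k)"
      using that by (intro prod.cong) auto
    also have "\<dots> = f (\<mu> j) * prod ?g {..<n}"
      using that by (intro prod_if_mult_at) auto
    also have "prod ?g {..<n} = (\<Prod>k<n. of_bool (\<mu> k = m \<longleftrightarrow> k = i))"
      by (intro prod.cong) auto
    finally show ?thesis by (simp add: prod_of_bool)
  qed
  then have "(\<Sum>i<n. \<Sum>j\<in>{..<n} - {i}. \<Prod>k<n.
          if k = i then of_bool (\<mu> k = m)
          else if k = j then of_bool (\<mu> k \<noteq> m) * f (\<mu> k) else of_bool (\<mu> k \<noteq> m))
      = (\<Sum>i<n. of_bool (\<forall>k\<in>{..<n}. \<mu> k = m \<longleftrightarrow> k = i) * (\<Sum>j\<in>{..<n} - {i}. f (\<mu> j)))"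
    by (simp add: sum_distrib_left)
  also have "\<dots> = indicator (unique_hit n m) \<mu> * sum_off_hit n m f \<mu>"
    by (subst sum_of_bool_unique_mult) (auto simp: unique_hit_def sum_off_hit_def)
  finally show ?thesis ..
qed

lemma expectation_unique_hit_mult_sum_off_hit:
  fixes \<pi> :: "'a pmf" and f :: "'a \<Rightarrow> real"
  assumes fin: "finite (set_pmf \<pi>)"
    and f_nonneg: "\<And>x. x \<in> set_pmf \<pi> \<Longrightarrow> 0 \<le> f x" \<comment> \<open>required by \<open>expectation_prod_Pi_pmf\<close>\<close>
  shows "measure_pmf.expectation (Pi_pmf {..<n} d (\<lambda>_. \<pi>))
           (\<lambda>\<mu>. indicator (unique_hit n m) \<mu> * sum_off_hit n m f \<mu>)
         = real n * (real n - 1) * (pmf \<pi> m * measure_pmf.expectation \<pi> (\<lambda>x. of_bool (x \<noteq> m) * f x)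
             * (1 - pmf \<pi> m) ^ (n - 2))"
proof -
  let ?P = "Pi_pmf {..<n} d (\<lambda>_. \<pi>)"
  define factor where "factor i j k x =
    (if k = i then of_bool (x = m) else if k = j then of_bool (x \<noteq> m) * f x else of_bool (x \<noteq> m) :: real)"
    for i j k :: nat and x
  have int_\<pi>: "integrable (measure_pmf \<pi>) g" for g :: "'a \<Rightarrow> real"
    using fin by (rule integrable_measure_pmf_finite)
  have int_P: "integrable (measure_pmf ?P) g" for g :: "(nat \<Rightarrow> 'a) \<Rightarrow> real"
    using fin by (intro integrable_measure_pmf_finite) (auto simp: set_Pi_pmf)
  have expectation_pair: "measure_pmf.expectation ?P (\<lambda>\<mu>. \<Prod>k<n. factor i j k (\<mu> k))
      = pmf \<pi> m * measure_pmf.expectation \<pi> (\<lambda>x. of_bool (x \<noteq> m) * f x) * (1 - pmf \<pi> m) ^ (n - 2)"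
    if "i < n" "j \<in> {..<n} - {i}" for i j
  proof -
    have "measure_pmf.expectation ?P (\<lambda>\<mu>. \<Prod>k<n. factor i j k (\<mu> k))
        = (\<Prod>k<n. measure_pmf.expectation \<pi> (factor i j k))"
      by (rule expectation_prod_Pi_pmf) (auto intro: int_\<pi> f_nonneg simp: factor_def)
    also have "\<dots> = (\<Prod>k<n. if k = i then pmf \<pi> m
        else if k = j then measure_pmf.expectation \<pi> (\<lambda>x. of_bool (x \<noteq> m) * f x) else 1 - pmf \<pi> m)"
    proof (intro prod.cong refl)
      fix k
      have "factor i j k = (if k = i then (\<lambda>x. of_bool (x = m)) else if k = j
          then (\<lambda>x. of_bool (x \<noteq> m) * f x) else (\<lambda>x. of_bool (x \<noteq> m)))"
        by (simp add: factor_def fun_eq_iff)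
      then show "measure_pmf.expectation \<pi> (factor i j k) = (if k = i then pmf \<pi> m
          else if k = j then measure_pmf.expectation \<pi> (\<lambda>x. of_bool (x \<noteq> m) * f x) else 1 - pmf \<pi> m)"
        by (simp add: expectation_of_bool_eq expectation_of_bool_neq)
    qed
    finally show ?thesis
      using that by (simp add: prod_if_two_points)
  qed
  have "measure_pmf.expectation ?P (\<lambda>\<mu>. indicator (unique_hit n m) \<mu> * sum_off_hit n m f \<mu>)
      = measure_pmf.expectation ?P (\<lambda>\<mu>. \<Sum>i<n. \<Sum>j\<in>{..<n} - {i}. \<Prod>k<n. factor i j k (\<mu> k))"
    by (simp add: indicator_unique_hit_mult_sum_off_hit factor_def)
  also have "\<dots> = (\<Sum>i<n. \<Sum>j\<in>{..<n} - {i}. measure_pmf.expectation ?P (\<lambda>\<mu>. \<Prod>k<n. factor i j k (\<mu> k)))"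
    by (simp add: Bochner_Integration.integral_sum int_P)
  also have "\<dots> = (\<Sum>i<n. \<Sum>j\<in>{..<n} - {i}.
      pmf \<pi> m * measure_pmf.expectation \<pi> (\<lambda>x. of_bool (x \<noteq> m) * f x) * (1 - pmf \<pi> m) ^ (n - 2))"
    by (intro sum.cong refl expectation_pair) auto
  finally show ?thesis by (simp add: mult.assoc)
qed

lemma expectation_cond_unique_hit:
  fixes \<pi> :: "'a pmf" and f :: "'a \<Rightarrow> real"
  assumes fin: "finite (set_pmf \<pi>)" and f_nonneg: "\<And>x. x \<in> set_pmf \<pi> \<Longrightarrow> 0 \<le> f x"
    and hit_pos: "0 < pmf \<pi> m" and hit_lt1: "pmf \<pi> m < 1" and n2: "2 \<le> n"
  shows "measure_pmf.expectation (cond_pmf (Pi_pmf {..<n} d (\<lambda>_. \<pi>)) (unique_hit n m)) (sum_off_hit n m f)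
         = (real n - 1) * measure_pmf.expectation \<pi> (\<lambda>x. of_bool (x \<noteq> m) * f x) / (1 - pmf \<pi> m)"
proof -
  let ?P = "Pi_pmf {..<n} d (\<lambda>_. \<pi>)"
  define K where "K = real n * (real n - 1) * pmf \<pi> m * (1 - pmf \<pi> m) ^ (n - 2)"
  have K_pos: "0 < K"
    using n2 hit_pos hit_lt1 by (simp add: K_def)
  have joint: "measure_pmf.expectation ?P (\<lambda>\<mu>. indicator (unique_hit n m) \<mu> * sum_off_hit n m g \<mu>)
      = K * measure_pmf.expectation \<pi> (\<lambda>x. of_bool (x \<noteq> m) * g x)"
    if "\<And>x. x \<in> set_pmf \<pi> \<Longrightarrow> 0 \<le> g x" for g
    using expectation_unique_hit_mult_sum_off_hit[where f = g and n = n and d = d and m = m, OF fin that]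
    by (simp add: K_def mult_ac)
  have count: "indicator (unique_hit n m) \<mu> * sum_off_hit n m (\<lambda>_. 1) \<mu>
      = (real n - 1) * indicator (unique_hit n m) \<mu>" for \<mu>
  proof (cases "\<mu> \<in> unique_hit n m")
    case True
    then have "(THE i. i < n \<and> \<mu> i = m) < n"
      using theI'[of "\<lambda>i. i < n \<and> \<mu> i = m"] by (simp add: unique_hit_def)
    then show ?thesis using n2 by (simp add: sum_off_hit_def of_nat_diff)
  qed simp
  have "(real n - 1) * measure_pmf.prob ?P (unique_hit n m) = K * (1 - pmf \<pi> m)"
    using joint[of "\<lambda>_. 1"] by (simp add: count expectation_of_bool_neq)
  then have prob: "measure_pmf.prob ?P (unique_hit n m) = K * (1 - pmf \<pi> m) / (real n - 1)"
    using n2 by (simp add: field_simps)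
  have fin_P: "finite (set_pmf ?P)"
    using fin by (auto simp: set_Pi_pmf)
  have "measure_pmf.expectation (cond_pmf ?P (unique_hit n m)) (sum_off_hit n m f)
      = K * measure_pmf.expectation \<pi> (\<lambda>x. of_bool (x \<noteq> m) * f x) / (K * (1 - pmf \<pi> m) / (real n - 1))"
    using n2 hit_lt1 K_pos
    by (simp add: expectation_cond_pmf_finite[OF fin_P] prob joint[OF f_nonneg])
  also have "\<dots> = (real n - 1) * measure_pmf.expectation \<pi> (\<lambda>x. of_bool (x \<noteq> m) * f x) / (1 - pmf \<pi> m)"
    using K_pos by (simp add: divide_divide_eq_right mult.commute mult.left_commute)
  finally show ?thesis .
qed

definition digit_value :: "real \<Rightarrow> nat \<Rightarrow> (nat \<Rightarrow> bool) \<Rightarrow> real" where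
  "digit_value \<eta> L X = 1/2 + (\<Sum>l=1..L. (if X l then 1 else 0) * \<eta> powi (- int l))"

lemma pi_dist_eq_map_digit_value:
  "pi_dist \<eta> L = map_pmf (digit_value \<eta> L) (Pi_pmf {1..L} False (\<lambda>_. bernoulli_pmf (1 / \<eta>^2)))"
proof -
  have "\<eta> powi (-2) = 1 / \<eta>^2"
    by (simp add: power_int_minus divide_inverse)
  then show ?thesis
    unfolding pi_dist_def digit_value_def by simp
qed

lemma mu_star_minus_digit_value:
  "mu_star \<eta> L - digit_value \<eta> L X = (\<Sum>l=1..L. of_bool (\<not> X l) / \<eta> ^ l)"
proof -
  have "mu_star \<eta> L - digit_value \<eta> L X
      = (\<Sum>l=1..L. \<eta> powi (- int l) - (if X l then 1 else 0) * \<eta> powi (- int l))"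
    by (simp add: mu_star_def digit_value_def sum_subtractf)
  also have "\<dots> = (\<Sum>l=1..L. of_bool (\<not> X l) / \<eta> ^ l)"
    by (intro sum.cong refl) (simp add: power_int_minus divide_inverse)
  finally show ?thesis .
qed

lemma digit_value_eq_mu_star_iff:
  assumes "0 < \<eta>"
  shows "digit_value \<eta> L X = mu_star \<eta> L \<longleftrightarrow> (\<forall>l\<in>{1..L}. X l)"
proof -
  have "digit_value \<eta> L X = mu_star \<eta> L \<longleftrightarrow> (\<Sum>l=1..L. of_bool (\<not> X l) / \<eta> ^ l) = 0"
    using mu_star_minus_digit_value[of \<eta> L X] by linarith
  also have "\<dots> \<longleftrightarrow> (\<forall>l\<in>{1..L}. X l)"
    using assms by (subst sum_nonneg_eq_0_iff) auto
  finally show ?thesis .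
qed

lemma finite_set_pmf_pi_dist: "finite (set_pmf (pi_dist \<eta> L))"
  by (auto simp: pi_dist_def set_Pi_pmf intro!: finite_imageI finite_PiE_dflt)

lemma measure_Pi_bernoulli_prefix:
  assumes "0 \<le> p" "p \<le> 1" "k \<le> Suc L"
  shows "measure_pmf.prob (Pi_pmf {1..L} False (\<lambda>_. bernoulli_pmf p)) {X. \<forall>l\<in>{1..<k}. X l}
         = p ^ (k - 1)"
proof -
  have "{X. \<forall>l\<in>{1..<k}. X l} = Pi {1..L} (\<lambda>l. if l < k then {True} else UNIV)"
    using assms(3) by (auto simp: Pi_def)
  then have "measure_pmf.prob (Pi_pmf {1..L} False (\<lambda>_. bernoulli_pmf p)) {X. \<forall>l\<in>{1..<k}. X l}
      = (\<Prod>l\<in>{1..L}. if l < k then p else 1)"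
    using assms by (simp add: measure_Pi_pmf_Pi measure_pmf_single if_distrib cong: if_cong)
  also have "\<dots> = (\<Prod>l\<in>{1..<k}. p)"
  proof -
    have "{l\<in>{1..L}. l < k} = {1..<k}"
      using assms(3) by auto
    then show ?thesis
      by (subst prod.inter_filter[symmetric]) simp_all
  qed
  finally show ?thesis by simp
qed

lemma pmf_pi_dist_mu_star:
  assumes "1 \<le> \<eta>"
  shows "pmf (pi_dist \<eta> L) (mu_star \<eta> L) = 1 / \<eta> ^ (2 * L)"
proof -
  have "digit_value \<eta> L -` {mu_star \<eta> L} = {X. \<forall>l\<in>{1..<Suc L}. X l}"
    using assms by (auto simp: digit_value_eq_mu_star_iff)
  then have "pmf (pi_dist \<eta> L) (mu_star \<eta> L)
      = measure_pmf.prob (Pi_pmf {1..L} False (\<lambda>_. bernoulli_pmf (1 / \<eta>^2))) {X. \<forall>l\<in>{1..<Suc L}. X l}"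
    by (simp add: pi_dist_eq_map_digit_value pmf_map)
  also have "\<dots> = (1 / \<eta>^2) ^ L"
    using assms measure_Pi_bernoulli_prefix[of "1 / \<eta>^2" "Suc L" L] by simp
  finally show ?thesis
    by (simp add: power_mult power_one_over)
qed

lemma inverse_square_gap_le:
  assumes "1 < \<eta>"
  shows "of_bool (digit_value \<eta> L X \<noteq> mu_star \<eta> L) / (mu_star \<eta> L - digit_value \<eta> L X)^2
         \<le> (\<Sum>k=1..L. \<eta> ^ (2 * k) * indicator {X. \<forall>l\<in>{1..<k}. X l} X)"
proof (cases "\<forall>l\<in>{1..L}. X l")
  case True
  then show ?thesis
    using assms by (simp add: digit_value_eq_mu_star_iff sum_nonneg)
next
  case False
  then obtain l1 where l1: "1 \<le> l1" "l1 \<le> L" "\<not> X l1" by auto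
  define k where "k = (LEAST l. 1 \<le> l \<and> l \<le> L \<and> \<not> X l)"
  have k: "1 \<le> k \<and> k \<le> L \<and> \<not> X k"
    unfolding k_def
    by (rule LeastI[where P = "\<lambda>l. 1 \<le> l \<and> l \<le> L \<and> \<not> X l" and k = l1]) (use l1 in auto)
  have k_least: "k \<le> l" if "1 \<le> l" "l \<le> L" "\<not> X l" for l
    unfolding k_def by (rule Least_le) (use that in auto)
  have prefix: "\<forall>l\<in>{1..<k}. X l"
  proof
    fix l assume "l \<in> {1..<k}"
    then show "X l" using k k_least[of l] by force
  qed
  have "of_bool (\<not> X k) / \<eta> ^ k \<le> (\<Sum>l=1..L. of_bool (\<not> X l) / \<eta> ^ l)"
    by (rule member_le_sum) (use k assms in auto)
  then have gap: "1 / \<eta> ^ k \<le> mu_star \<eta> L - digit_value \<eta> L X"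
    using k by (simp add: mu_star_minus_digit_value)
  have sq: "(1 / \<eta> ^ k)^2 \<le> (mu_star \<eta> L - digit_value \<eta> L X)^2"
    by (rule power_mono[OF gap]) (use assms in simp)
  have "of_bool (digit_value \<eta> L X \<noteq> mu_star \<eta> L) / (mu_star \<eta> L - digit_value \<eta> L X)^2
      \<le> 1 / (1 / \<eta> ^ k)^2"
    by (rule frac_le[OF _ _ _ sq]) (use assms in simp_all)
  also have "\<dots> = \<eta> ^ (2 * k) * indicator {X. \<forall>l\<in>{1..<k}. X l} X"
    using prefix by (simp add: power_mult power_one_over mult.commute)
  also have "\<dots> \<le> (\<Sum>k=1..L. \<eta> ^ (2 * k) * indicator {X. \<forall>l\<in>{1..<k}. X l} X)"
    by (rule member_le_sum) (use k assms in auto)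
  finally show ?thesis .
qed

lemma expectation_pi_dist_inverse_square_gap:
  assumes "1 < \<eta>"
  shows "measure_pmf.expectation (pi_dist \<eta> L) (\<lambda>x. of_bool (x \<noteq> mu_star \<eta> L) * (1 / (mu_star \<eta> L - x)^2))
         \<le> real L * \<eta>^2"
proof -
  let ?B = "Pi_pmf {1..L} False (\<lambda>_. bernoulli_pmf (1 / \<eta>^2))"
  have int_B: "integrable (measure_pmf ?B) g" for g :: "(nat \<Rightarrow> bool) \<Rightarrow> real"
    by (intro integrable_measure_pmf_finite) (auto simp: set_Pi_pmf)
  have "measure_pmf.expectation (pi_dist \<eta> L) (\<lambda>x. of_bool (x \<noteq> mu_star \<eta> L) * (1 / (mu_star \<eta> L - x)^2))
      = measure_pmf.expectation ?B
          (\<lambda>X. of_bool (digit_value \<eta> L X \<noteq> mu_star \<eta> L) / (mu_star \<eta> L - digit_value \<eta> L X)^2)"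
    by (simp add: pi_dist_eq_map_digit_value)
  also have "\<dots> \<le> measure_pmf.expectation ?B
      (\<lambda>X. \<Sum>k=1..L. \<eta> ^ (2 * k) * indicator {X. \<forall>l\<in>{1..<k}. X l} X)"
    using assms by (intro integral_mono int_B inverse_square_gap_le)
  also have "\<dots> = (\<Sum>k=1..L. \<eta> ^ (2 * k) * measure_pmf.prob ?B {X. \<forall>l\<in>{1..<k}. X l})"
    by (subst Bochner_Integration.integral_sum[OF int_B]) simp
  also have "\<dots> = (\<Sum>k=1..L. \<eta>^2)"
  proof (intro sum.cong refl)
    fix k assume k: "k \<in> {1..L}"
    then have "2 * k = 2 + 2 * (k - 1)"
      by auto
    then have "\<eta> ^ (2 * k) = \<eta>^2 * (\<eta>^2) ^ (k - 1)"
      by (simp only: power_add power_mult)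
    moreover have "measure_pmf.prob ?B {X. \<forall>l\<in>{1..<k}. X l} = (1 / \<eta>^2) ^ (k - 1)"
      using assms k by (intro measure_Pi_bernoulli_prefix) auto
    ultimately show "\<eta> ^ (2 * k) * measure_pmf.prob ?B {X. \<forall>l\<in>{1..<k}. X l} = \<eta>^2"
      using assms by (simp add: power_one_over)
  qed
  finally show ?thesis by simp
qed

theorem lemma5:
  fixes n R L :: nat and \<eta> :: real
  assumes "1 \<le> R" and "real R \<le> ln (real n) / (24 * ln (ln (real n)))"
    and "L = 6 * R" and "\<eta> = real n powr (1 / (2 * real L))"
  shows "measure_pmf.expectation (cond_pmf (mus_dist n \<eta> L) (E0 n \<eta> L)) (H n \<eta> L)
           \<le> \<eta> ^ (2 + 2 * L) * real L"
proof -
  have n2: "2 \<le> n"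
  proof (rule ccontr)
    assume "\<not> 2 \<le> n"
    then have "n = 0 \<or> n = 1" by auto
    then have "ln (real n) = 0" by auto
    then show False using assms(1,2) by simp
  qed
  have L1: "1 \<le> L" using assms(1,3) by simp
  have eta1: "1 < \<eta>" unfolding assms(4) using n2 L1 by (intro gr_one_powr) auto
  have eta_pow: "\<eta> ^ (2 * L) = real n"
    using n2 L1 by (simp add: assms(4) powr_realpow[symmetric] powr_powr)
  have hit: "pmf (pi_dist \<eta> L) (mu_star \<eta> L) = 1 / real n"
    using eta1 by (simp add: pmf_pi_dist_mu_star eta_pow)
  define e where "e = measure_pmf.expectation (pi_dist \<eta> L)
    (\<lambda>x. of_bool (x \<noteq> mu_star \<eta> L) * (1 / (mu_star \<eta> L - x)^2))"
  have "H n \<eta> L = sum_off_hit n (mu_star \<eta> L) (\<lambda>x. 1 / (mu_star \<eta> L - x)^2)"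
    by (simp add: fun_eq_iff H_def sum_off_hit_def)
  then have "measure_pmf.expectation (cond_pmf (mus_dist n \<eta> L) (E0 n \<eta> L)) (H n \<eta> L)
      = (real n - 1) * e / (1 - 1 / real n)"
    using n2 hit
    by (simp add: mus_dist_def E0_def unique_hit_def[symmetric] e_def expectation_cond_unique_hit
        finite_set_pmf_pi_dist)
  also have "\<dots> = real n * e"
    using n2 by (simp add: field_simps)
  also have "\<dots> \<le> real n * (real L * \<eta>^2)"
    unfolding e_def by (intro mult_left_mono expectation_pi_dist_inverse_square_gap eta1) simp
  also have "\<dots> = \<eta> ^ (2 + 2 * L) * real L"
    by (simp add: eta_pow[symmetric] power_add power2_eq_square)
  finally show ?thesis .
qed

end
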